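(* Let $m_1,m_2,t_{16}\in\mathbb{R}$ and let $\mathfrak g$ be the real linear span of $E_1=\begin{pmatrix} -2m_1-2im_2&0&im_1(m_1+im_2)&1\\0&2im_2&0&0\\4i&0&2m_1&0\\0&0&0&0\end{pmatrix}$, $E_2=\begin{pmatrix} 2m_2&0&0&i\\0&2m_2+it_{16}&0&0\\0&0&2m_2&0\\0&0&0&0\end{pmatrix}$, $E_3=\begin{pmatrix}0&-m_1-im_2&0&0\\-2im_2&0&-m_1m_2&1\\0&2i&0&0\\0&0&0&0\end{pmatrix}$, $E_4=\begin{pmatrix}0&im_1-m_2&0&0\\2m_2&0&-im_1m_2&i\\0&2&0&0\\0&0&0&0\end{pmatrix}$, $E_5=\begin{pmatrix}-m_1m_2&0&0&0\\0&-\frac12 m_1(2m_2+it_{16})&0&0\\0&0&-m_1m_2&1\\0&0&0&0\end{pmatrix}$. Then every integral variety of type $(1/2,0)$ related to $\mathfrak g$ is affinely equivalent to (an open piece of) one of the hypersurfaces 1) $v=2x_1^2+|z_2|^2$; 2) $v^2=|z_1|^2+|z_2|^2$.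
   Context: Coordinates in $\mathbb{C}^3$ are $z_1=x_1+iy_1$, $z_2=x_2+iy_2$, $w=u+iv$, $z=(z_1,z_2)$. To a complex $4\times4$ matrix $\begin{pmatrix}a_1&a_2&a_3&p\\ b_1&b_2&b_3&s\\ c_1&c_2&c_3&q\\0&0&0&0\end{pmatrix}$ one associates the holomorphic affine vector field $Z=(a_1z_1+a_2z_2+a_3w+p)\frac{\partial}{\partial z_1}+(b_1z_1+b_2z_2+b_3w+s)\frac{\partial}{\partial z_2}+(c_1z_1+c_2z_2+c_3w+q)\frac{\partial}{\partial w}$. For a real linear span $\mathfrak g$ of such matrices, an integral variety of type $(1/2,0)$ related to $\mathfrak g$ is a real-analytic strictly pseudoconvex real hypersurface $M$ defined near $0\in\mathbb{C}^3$, with $0\in M$, given near $0$ by an equation $v=|z_1|^2+|z_2|^2+\frac12(z_1^2+\bar z_1^2)+\sum_{k+l+2m\ge 3}F_{klm}(z,\bar z)u^m$ (with $F_{klm}$ a polynomial of degree $k$ in $z$ and $l$ in $\bar z$, the right-hand side real), such that for every $Z\in\mathfrak g$ the real vector field $Z+\bar Z$ is tangent to $M$, i.e. $\mathrm{Re}(Z(\Phi))|_M=0$ for a defining function $\Phi$ of $M$. Two hypersurfaces are affinely equivalent if a complex affine transformation of $\mathbb{C}^3$ maps a neighbourhood in one onto an open piece of the other. *)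

theory Defs
  imports "HOL-Analysis.Analysis"
begin

text \<open>Points of C^3 are vectors p :: complex^3 with p$1 = z1, p$2 = z2, p$3 = w.\<close>

type_synonym pt = "complex^3"

definition mat4 :: "complex list list \<Rightarrow> complex^4^4" where
  "mat4 rs = vector (map vector rs)"

text \<open>Holomorphic affine vector field associated to a 4x4 matrix (last row ignored,
  it is zero for the matrices considered). As a real vector field Z + conj Z on R^6 = C^3
  it is p \<mapsto> affine_vf A p.\<close>
definition affine_vf :: "complex^4^4 \<Rightarrow> pt \<Rightarrow> pt" where
  "affine_vf A p = vector
     [A$1$1 * p$1 + A$1$2 * p$2 + A$1$3 * p$3 + A$1$4,
      A$2$1 * p$1 + A$2$2 * p$2 + A$2$3 * p$3 + A$2$4,
      A$3$1 * p$1 + A$3$2 * p$2 + A$3$3 * p$3 + A$3$4]"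

text \<open>Multi-indices (a,b,d,e,f) for monomials x1^a y1^b x2^d y2^e u^f.\<close>
type_synonym midx = "nat \<times> nat \<times> nat \<times> nat \<times> nat"

definition monom5 :: "midx \<Rightarrow> pt \<Rightarrow> real" where
  "monom5 \<alpha> p = (case \<alpha> of (a,b,d,e,f) \<Rightarrow>
     Re (p$1) ^ a * Im (p$1) ^ b * Re (p$2) ^ d * Im (p$2) ^ e * Re (p$3) ^ f)"

definition wdeg :: "midx \<Rightarrow> nat" where
  "wdeg \<alpha> = (case \<alpha> of (a,b,d,e,f) \<Rightarrow> a + b + d + e + 2 * f)"

definition hot :: "(midx \<Rightarrow> real) \<Rightarrow> pt \<Rightarrow> real" where
  "hot c p = (\<Sum>\<^sub>\<infinity>\<alpha>. c \<alpha> * monom5 \<alpha> p)"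

definition defn_fun :: "(midx \<Rightarrow> real) \<Rightarrow> pt \<Rightarrow> real" where
  "defn_fun c p = Im (p$3) - (cmod (p$1) ^ 2 + cmod (p$2) ^ 2 + Re ((p$1) ^ 2)) - hot c p"

definition integral_variety :: "(complex^4^4) set \<Rightarrow> pt set \<Rightarrow> bool" where
  "integral_variety g M \<longleftrightarrow>
     (\<exists>U c. open U \<and> 0 \<in> U \<and>
        (\<forall>\<alpha>. wdeg \<alpha> < 3 \<longrightarrow> c \<alpha> = 0) \<and>
        (\<forall>p\<in>U. (\<lambda>\<alpha>. c \<alpha> * monom5 \<alpha> p) summable_on UNIV) \<and>
        M = {p \<in> U. defn_fun c p = 0} \<and>
        (\<forall>A\<in>g. \<forall>p\<in>M. \<exists>D. (defn_fun c has_derivative D) (at p) \<and> D (affine_vf A p) = 0))"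

definition affinely_equivalent :: "pt set \<Rightarrow> pt set \<Rightarrow> bool" where
  "affinely_equivalent M S \<longleftrightarrow>
     (\<exists>(L::complex^3^3) b V W. invertible L \<and> open V \<and> 0 \<in> V \<and> open W \<and>
        (\<lambda>p. L *v p + b) ` (M \<inter> V) = S \<inter> W)"

definition model1 :: "pt set" where
  "model1 = {p. Im (p$3) = 2 * Re (p$1) ^ 2 + cmod (p$2) ^ 2}"

definition model2 :: "pt set" where
  "model2 = {p. Im (p$3) ^ 2 = cmod (p$1) ^ 2 + cmod (p$2) ^ 2}"

definition E1 :: "real \<Rightarrow> real \<Rightarrow> real \<Rightarrow> complex^4^4" where
  "E1 m1 m2 t16 = mat4
    [[- 2 * m1 - 2 * \<i> * m2, 0, \<i> * m1 * (m1 + \<i> * m2), 1],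
     [0, 2 * \<i> * m2, 0, 0],
     [4 * \<i>, 0, 2 * m1, 0],
     [0, 0, 0, 0]]"

definition E2 :: "real \<Rightarrow> real \<Rightarrow> real \<Rightarrow> complex^4^4" where
  "E2 m1 m2 t16 = mat4
    [[2 * m2, 0, 0, \<i>],
     [0, 2 * m2 + \<i> * t16, 0, 0],
     [0, 0, 2 * m2, 0],
     [0, 0, 0, 0]]"

definition E3 :: "real \<Rightarrow> real \<Rightarrow> real \<Rightarrow> complex^4^4" where
  "E3 m1 m2 t16 = mat4
    [[0, - m1 - \<i> * m2, 0, 0],
     [- 2 * \<i> * m2, 0, - m1 * m2, 1],
     [0, 2 * \<i>, 0, 0],
     [0, 0, 0, 0]]"

definition E4 :: "real \<Rightarrow> real \<Rightarrow> real \<Rightarrow> complex^4^4" where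
  "E4 m1 m2 t16 = mat4
    [[0, \<i> * m1 - m2, 0, 0],
     [2 * m2, 0, - \<i> * m1 * m2, \<i>],
     [0, 2, 0, 0],
     [0, 0, 0, 0]]"

definition E5 :: "real \<Rightarrow> real \<Rightarrow> real \<Rightarrow> complex^4^4" where
  "E5 m1 m2 t16 = mat4
    [[- m1 * m2, 0, 0, 0],
     [0, - (1/2) * m1 * (2 * m2 + \<i> * t16), 0, 0],
     [0, 0, - m1 * m2, 1],
     [0, 0, 0, 0]]"

definition g_alg :: "real \<Rightarrow> real \<Rightarrow> real \<Rightarrow> (complex^4^4) set" where
  "g_alg m1 m2 t16 = span {E1 m1 m2 t16, E2 m1 m2 t16, E3 m1 m2 t16, E4 m1 m2 t16, E5 m1 m2 t16}"

end

theory Submission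
  imports Defs
begin

text \<open>The model function
  Phi = v (1 - 2 m1 x1 + 2 m2 y1 - m1 m2 u + (m2^2 - m1^2) v / 2) - 2 x1^2 - |z2|^2
  is a relative invariant of g: E1, E3, E4 annihilate it and E2, E5 multiply it by constants.
  Write the integral variety as a graph v = H(z, u) and let G(p) = Phi(z, u + i H(p)).
  Where the fields of g are tangent to M, the derivative of G along them is a multiple of G.
  Near 0 these fields are close to the coordinate directions of z1, z2, u, and G does not
  depend on v, so |dG| <= K |G|. As G(0) = 0, Gronwall's inequality along rays gives G = 0,
  i.e. near 0 the variety is the zero set of Phi. An explicit complex affine map takes this
  zero set to v = 2 x1^2 + |z2|^2 if m2 = 0, and to v^2 = |z1|^2 + |z2|^2 otherwise.\<close>

lemma vector_4 [simp]:
  "(vector [x,y,z,w] :: 'a::zero^4)$1 = x"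
  "(vector [x,y,z,w] :: 'a::zero^4)$2 = y"
  "(vector [x,y,z,w] :: 'a::zero^4)$3 = z"
  "(vector [x,y,z,w] :: 'a::zero^4)$4 = w"
  unfolding vector_def by simp_all

lemma abs_linear_le_axis_sum:
  fixes f :: "complex^'n \<Rightarrow> real"
  assumes "linear f"
  shows "\<bar>f e\<bar> \<le> (\<Sum>i\<in>UNIV. \<bar>f (axis i 1)\<bar> + \<bar>f (axis i \<i>)\<bar>) * norm e"
proof -
  have axis_split: "axis i (e$i) = Re (e$i) *\<^sub>R axis i 1 + Im (e$i) *\<^sub>R axis i \<i>" for i
    by (simp add: vec_eq_iff axis_def complex_eq_iff)
  have "e = (\<Sum>i\<in>UNIV. axis i (e$i))"
    by (simp add: vec_eq_iff axis_def if_distrib cong: if_cong)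
  then have "f e = f (\<Sum>i\<in>UNIV. axis i (e$i))"
    by (rule arg_cong)
  also have "\<dots> = (\<Sum>i\<in>UNIV. f (axis i (e$i)))"
    by (rule linear_sum[OF assms])
  also have "\<dots> = (\<Sum>i\<in>UNIV. Re (e$i) * f (axis i 1) + Im (e$i) * f (axis i \<i>))"
    unfolding axis_split using assms by (simp add: linear_add linear_scale)
  finally have expansion: "f e = (\<Sum>i\<in>UNIV. Re (e$i) * f (axis i 1) + Im (e$i) * f (axis i \<i>))" .
  have "\<bar>f e\<bar> \<le> (\<Sum>i\<in>UNIV. \<bar>Re (e$i)\<bar> * \<bar>f (axis i 1)\<bar> + \<bar>Im (e$i)\<bar> * \<bar>f (axis i \<i>)\<bar>)"
    unfolding expansion
    by (rule order_trans[OF sum_abs], rule sum_mono) (metis abs_mult abs_triangle_ineq)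
  also have "\<dots> \<le> (\<Sum>i\<in>UNIV. norm e * \<bar>f (axis i 1)\<bar> + norm e * \<bar>f (axis i \<i>)\<bar>)"
    using order_trans[OF abs_Re_le_cmod Finite_Cartesian_Product.norm_nth_le]
      order_trans[OF abs_Im_le_cmod Finite_Cartesian_Product.norm_nth_le]
    by (intro sum_mono add_mono mult_right_mono) auto
  also have "\<dots> = (\<Sum>i\<in>UNIV. \<bar>f (axis i 1)\<bar> + \<bar>f (axis i \<i>)\<bar>) * norm e"
    by (simp add: sum_distrib_left distrib_left mult.commute)
  finally show ?thesis .
qed

lemma onorm_le_of_near_axes:
  fixes f :: "complex^'n \<Rightarrow> real" and a :: real
  assumes f: "bounded_linear f"
    and near: "\<And>i z. z \<in> {1, \<i>} \<Longrightarrow> \<exists>w. norm (w - axis i z) \<le> 1 / (4 * real CARD('n)) \<and> \<bar>f w\<bar> \<le> a"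
  shows "onorm f \<le> 4 * real CARD('n) * a"
proof -
  define N where "N = onorm f"
  define n where "n = real CARD('n)"
  have n: "n > 0" by (simp add: n_def)
  have N: "N \<ge> 0" using f by (simp add: N_def onorm_pos_le)
  have axis_bound: "\<bar>f (axis i z)\<bar> \<le> a + N / (4 * n)" if z: "z \<in> {1, \<i>}" for i z
  proof -
    obtain w where w: "norm (w - axis i z) \<le> 1 / (4 * n)" "\<bar>f w\<bar> \<le> a"
      using near[OF z] by (auto simp: n_def)
    have "f (axis i z) = f w - f (w - axis i z)"
      using f by (simp add: linear_diff bounded_linear.linear)
    also have "\<bar>\<dots>\<bar> \<le> \<bar>f w\<bar> + N * norm (w - axis i z)"
      using onorm[OF f, of "w - axis i z"] by (simp add: N_def abs_triangle_ineq4 [THEN order_trans])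
    also have "\<dots> \<le> a + N * (1 / (4 * n))"
      using w N by (intro add_mono mult_left_mono) auto
    finally show ?thesis by simp
  qed
  have "\<bar>f e\<bar> \<le> (2 * n * a + N / 2) * norm e" for e
  proof -
    have "(\<Sum>i\<in>UNIV. \<bar>f (axis i 1)\<bar> + \<bar>f (axis i \<i>)\<bar>) \<le> (\<Sum>i\<in>(UNIV::'n set). 2 * (a + N / (4 * n)))"
    proof (rule sum_mono)
      show "\<bar>f (axis i 1)\<bar> + \<bar>f (axis i \<i>)\<bar> \<le> 2 * (a + N / (4 * n))" for i
        using axis_bound[of 1 i] axis_bound[of \<i> i] by simp
    qed
    also have "\<dots> = 2 * n * a + N / 2"
      using n by (simp add: n_def field_simps)
    finally show ?thesis
      using abs_linear_le_axis_sum[OF bounded_linear.linear[OF f]] norm_ge_zero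
      by (meson mult_right_mono order_trans)
  qed
  then have "N \<le> 2 * n * a + N / 2"
    unfolding N_def by (intro onorm_le) auto
  then show ?thesis by (simp add: n_def N_def)
qed

lemma has_derivative_const_direction:
  assumes "(f has_derivative f') (at y)" and "\<And>t::real. f (y + t *\<^sub>R w) = f y"
  shows "f' w = 0"
proof -
  have "((\<lambda>t::real. y + t *\<^sub>R w) has_derivative (\<lambda>t. t *\<^sub>R w)) (at 0)"
    by (auto intro!: derivative_eq_intros)
  from has_derivative_compose[OF this, of f f'] assms
  have "((\<lambda>t::real. f y) has_derivative (\<lambda>t. f' (t *\<^sub>R w))) (at 0)"
    by simp
  then have "(\<lambda>t. f' (t *\<^sub>R w)) = (\<lambda>t::real. 0)"
    by (rule has_derivative_unique[OF _ has_derivative_const])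
  then show ?thesis by (metis scaleR_one)
qed

lemma has_derivative_translation_invariant:
  assumes "\<And>p. f (p + d) = f p" and "(f has_derivative f') (at (y + d))"
  shows "(f has_derivative f') (at y)"
proof -
  have "((\<lambda>p. p + d) has_derivative (\<lambda>e. e)) (at y)"
    by (auto intro!: derivative_eq_intros)
  from has_derivative_compose[OF this assms(2)] show ?thesis
    by (simp add: assms(1))
qed

lemma Gronwall_zero:
  fixes \<phi> d :: "real \<Rightarrow> real"
  assumes der: "\<And>t. 0 \<le> t \<Longrightarrow> t \<le> 1 \<Longrightarrow> (\<phi> has_real_derivative d t) (at t)"
    and bound: "\<And>t. 0 \<le> t \<Longrightarrow> t \<le> 1 \<Longrightarrow> \<bar>d t\<bar> \<le> K * \<bar>\<phi> t\<bar>"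
    and "\<phi> 0 = 0"
  shows "\<phi> 1 = 0"
proof -
  define \<psi> where "\<psi> t = (\<phi> t)^2 * exp (-2*K*t)" for t
  define \<psi>' where "\<psi>' t = 2 * exp (-2*K*t) * (\<phi> t * d t - K * (\<phi> t)^2)" for t
  have \<psi>_deriv: "(\<psi> has_real_derivative \<psi>' t) (at t)" if "0 \<le> t" "t \<le> 1" for t
    unfolding \<psi>_def \<psi>'_def using der[OF that]
    by (auto intro!: derivative_eq_intros simp: algebra_simps power2_eq_square)
  have \<psi>'_nonpos: "\<psi>' t \<le> 0" if "0 \<le> t" "t \<le> 1" for t
  proof -
    have "\<phi> t * d t \<le> \<bar>\<phi> t\<bar> * \<bar>d t\<bar>" by (metis abs_ge_self abs_mult)
    also have "\<dots> \<le> \<bar>\<phi> t\<bar> * (K * \<bar>\<phi> t\<bar>)" using bound[OF that] by (simp add: mult_left_mono)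
    finally have "\<phi> t * d t - K * (\<phi> t)^2 \<le> 0" by (simp add: power2_eq_square algebra_simps)
    then show ?thesis by (simp add: \<psi>'_def mult_nonneg_nonpos)
  qed
  have "continuous_on {0..1} \<psi>"
    using \<psi>_deriv by (intro continuous_at_imp_continuous_on ballI) (meson DERIV_isCont atLeastAtMost_iff)
  then have "\<psi> 1 \<le> \<psi> 0"
  proof (rule DERIV_nonpos_imp_decreasing_open[rotated 2])
    show "\<exists>y. (\<psi> has_real_derivative y) (at x) \<and> y \<le> 0" if "0 < x" "x < 1" for x
      using \<psi>_deriv[of x] \<psi>'_nonpos[of x] that by (intro exI conjI) auto
  qed simp
  then have "(\<phi> 1)^2 * exp (-2*K) \<le> 0" using assms(3) by (simp add: \<psi>_def)
  then show ?thesis by (simp add: mult_le_0_iff)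
qed

lemmas has_derivative_vec_nth [derivative_intros] =
  bounded_linear.has_derivative[OF bounded_linear_vec_nth]

lemma axis_nth_3 [simp]:
  "(axis 1 z :: complex^3)$1 = z" "(axis 1 z :: complex^3)$2 = 0" "(axis 1 z :: complex^3)$3 = 0"
  "(axis 2 z :: complex^3)$1 = 0" "(axis 2 z :: complex^3)$2 = z" "(axis 2 z :: complex^3)$3 = 0"
  "(axis 3 z :: complex^3)$1 = 0" "(axis 3 z :: complex^3)$2 = 0" "(axis 3 z :: complex^3)$3 = z"
  by (simp_all add: axis_def)

definition model_factor :: "real \<Rightarrow> real \<Rightarrow> pt \<Rightarrow> real \<Rightarrow> real" where
  "model_factor m1 m2 p v = 1 - 2*m1*Re (p$1) + 2*m2*Im (p$1) - m1*m2*Re (p$3) + ((m2^2 - m1^2)/2) * v"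

definition model_fun :: "real \<Rightarrow> real \<Rightarrow> pt \<Rightarrow> real" where
  "model_fun m1 m2 p = Im (p$3) * model_factor m1 m2 p (Im (p$3)) - 2*Re (p$1)^2 - Re (p$2)^2 - Im (p$2)^2"

definition model_fun_deriv :: "real \<Rightarrow> real \<Rightarrow> pt \<Rightarrow> pt \<Rightarrow> real" where
  "model_fun_deriv m1 m2 p e =
     Im (e$3) * model_factor m1 m2 p (Im (p$3))
     + Im (p$3) * (- 2*m1*Re (e$1) + 2*m2*Im (e$1) - m1*m2*Re (e$3) + ((m2^2 - m1^2)/2) * Im (e$3))
     - 4*Re (p$1)*Re (e$1) - 2*Re (p$2)*Re (e$2) - 2*Im (p$2)*Im (e$2)"

lemma model_fun_has_derivative: "(model_fun m1 m2 has_derivative model_fun_deriv m1 m2 p) (at p)"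
  unfolding model_fun_def[abs_def] model_factor_def
  by (rule derivative_eq_intros refl | simp)+
     (simp add: fun_eq_iff model_fun_deriv_def model_factor_def algebra_simps power2_eq_square)

lemma model_fun_deriv_affine_vf:
  "model_fun_deriv m1 m2 p (affine_vf (E1 m1 m2 t) p) = 0"
  "model_fun_deriv m1 m2 p (affine_vf (E2 m1 m2 t) p) = 4*m2 * model_fun m1 m2 p"
  "model_fun_deriv m1 m2 p (affine_vf (E3 m1 m2 t) p) = 0"
  "model_fun_deriv m1 m2 p (affine_vf (E4 m1 m2 t) p) = 0"
  "model_fun_deriv m1 m2 p (affine_vf (E5 m1 m2 t) p) = -2*m1*m2 * model_fun m1 m2 p"
  by (simp_all add: affine_vf_def E1_def E2_def E3_def E4_def E5_def mat4_def model_fun_deriv_def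
      model_fun_def model_factor_def algebra_simps power2_eq_square field_simps)

definition g_generators :: "real \<Rightarrow> real \<Rightarrow> real \<Rightarrow> (complex^4^4) set" where
  "g_generators m1 m2 t = {E1 m1 m2 t, E2 m1 m2 t, E3 m1 m2 t, E4 m1 m2 t, E5 m1 m2 t}"

lemma g_generators_subset_g_alg: "g_generators m1 m2 t \<subseteq> g_alg m1 m2 t"
  unfolding g_generators_def g_alg_def by (rule span_superset)

lemma model_fun_deriv_generators:
  assumes "A \<in> g_generators m1 m2 t"
  shows "\<exists>k. \<bar>k\<bar> \<le> 4*\<bar>m2\<bar> + 2*\<bar>m1*m2\<bar> \<and>
    model_fun_deriv m1 m2 p (affine_vf A p) = k * model_fun m1 m2 p"
proof -
  from assms consider "A \<in> {E1 m1 m2 t, E3 m1 m2 t, E4 m1 m2 t}" | "A = E2 m1 m2 t" | "A = E5 m1 m2 t"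
    unfolding g_generators_def by blast
  then show ?thesis
  proof cases
    case 1
    then show ?thesis by (intro exI[of _ 0]) (auto simp: model_fun_deriv_affine_vf)
  next
    case 2
    then show ?thesis by (intro exI[of _ "4*m2"]) (simp add: model_fun_deriv_affine_vf abs_mult)
  next
    case 3
    then show ?thesis by (intro exI[of _ "-2*m1*m2"]) (simp add: model_fun_deriv_affine_vf abs_mult)
  qed
qed

lemma affine_vf_generators_at_0:
  "affine_vf (E1 m1 m2 t) 0 = axis 1 1"
  "affine_vf (E2 m1 m2 t) 0 = axis 1 \<i>"
  "affine_vf (E3 m1 m2 t) 0 = axis 2 1"
  "affine_vf (E4 m1 m2 t) 0 = axis 2 \<i>"
  "affine_vf (E5 m1 m2 t) 0 = axis 3 1"
  by (simp_all add: affine_vf_def E1_def E2_def E3_def E4_def E5_def mat4_def vec_eq_iff forall_3)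

lemma monom5_continuous: "continuous_on S (monom5 \<alpha>)"
  by (cases \<alpha>) (auto simp: monom5_def intro!: continuous_intros)

lemma abs_monom5_mono:
  assumes "\<bar>Re (p$1)\<bar> \<le> \<bar>Re (q$1)\<bar>" "\<bar>Im (p$1)\<bar> \<le> \<bar>Im (q$1)\<bar>"
    and "\<bar>Re (p$2)\<bar> \<le> \<bar>Re (q$2)\<bar>" "\<bar>Im (p$2)\<bar> \<le> \<bar>Im (q$2)\<bar>" "\<bar>Re (p$3)\<bar> \<le> \<bar>Re (q$3)\<bar>"
  shows "\<bar>monom5 \<alpha> p\<bar> \<le> \<bar>monom5 \<alpha> q\<bar>"
proof -
  obtain a b d e f where \<alpha>: "\<alpha> = (a, b, d, e, f)" by (cases \<alpha>)
  have "\<bar>monom5 \<alpha> p\<bar> = \<bar>Re (p$1)\<bar>^a * \<bar>Im (p$1)\<bar>^b * \<bar>Re (p$2)\<bar>^d * \<bar>Im (p$2)\<bar>^e * \<bar>Re (p$3)\<bar>^f"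
    by (simp add: \<alpha> monom5_def abs_mult power_abs)
  also have "\<dots> \<le> \<bar>Re (q$1)\<bar>^a * \<bar>Im (q$1)\<bar>^b * \<bar>Re (q$2)\<bar>^d * \<bar>Im (q$2)\<bar>^e * \<bar>Re (q$3)\<bar>^f"
    by (intro mult_mono power_mono zero_le_power abs_ge_zero mult_nonneg_nonneg assms)
  also have "\<dots> = \<bar>monom5 \<alpha> q\<bar>"
    by (simp add: \<alpha> monom5_def abs_mult power_abs)
  finally show ?thesis .
qed

lemma hot_continuous_on_box:
  assumes "(\<lambda>\<alpha>. c \<alpha> * monom5 \<alpha> q) summable_on UNIV"
  shows "continuous_on {p. \<bar>Re (p$1)\<bar> \<le> \<bar>Re (q$1)\<bar> \<and> \<bar>Im (p$1)\<bar> \<le> \<bar>Im (q$1)\<bar> \<and>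
      \<bar>Re (p$2)\<bar> \<le> \<bar>Re (q$2)\<bar> \<and> \<bar>Im (p$2)\<bar> \<le> \<bar>Im (q$2)\<bar> \<and> \<bar>Re (p$3)\<bar> \<le> \<bar>Re (q$3)\<bar>} (hot c)"
    (is "continuous_on ?Y _")
proof -
  have bound: "norm (c \<alpha> * monom5 \<alpha> p) \<le> norm (c \<alpha> * monom5 \<alpha> q)" if "p \<in> ?Y" for \<alpha> p
    using that abs_monom5_mono[of p q \<alpha>] by (simp add: abs_mult mult_left_mono)
  have "uniform_limit ?Y (\<lambda>X p. \<Sum>\<alpha>\<in>X. c \<alpha> * monom5 \<alpha> p) (\<lambda>p. \<Sum>\<^sub>\<infinity>\<alpha>. c \<alpha> * monom5 \<alpha> p)
      (finite_subsets_at_top UNIV)"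
    using bound summable_on_iff_abs_summable_on_real[THEN iffD1, OF assms]
    by (intro Weierstrass_m_test_general) auto
  moreover have "\<forall>\<^sub>F X in finite_subsets_at_top UNIV. continuous_on ?Y (\<lambda>p. \<Sum>\<alpha>\<in>X. c \<alpha> * monom5 \<alpha> p)"
    by (intro always_eventually allI continuous_intros monom5_continuous)
  ultimately show ?thesis
    unfolding hot_def[abs_def] by (intro uniform_limit_theorem) auto
qed

lemma isCont_hot:
  assumes "open U" "0 \<in> U" and summable: "\<forall>p\<in>U. (\<lambda>\<alpha>. c \<alpha> * monom5 \<alpha> p) summable_on UNIV"
  shows "isCont (hot c) 0"
proof -
  obtain r where r: "r > 0" "ball 0 r \<subseteq> U" using assms(1,2) openE by blast
  define q1 :: pt where "q1 = vector [Complex 1 1, Complex 1 1, 1]"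
  define \<rho> where "\<rho> = r / (norm q1 + 1)"
  have "norm q1 + 1 > 0" by (simp add: add_nonneg_pos)
  then have \<rho>: "\<rho> > 0" and "\<rho> * (norm q1 + 1) = r"
    using r by (simp_all add: \<rho>_def)
  then have "\<rho> * norm q1 < r" by (simp add: distrib_left)
  have "\<rho> *\<^sub>R q1 \<in> U" using \<open>\<rho> * norm q1 < r\<close> \<rho> r(2) by (auto simp: dist_norm)
  define Y where "Y = {p::pt. \<bar>Re (p$1)\<bar> \<le> \<rho> \<and> \<bar>Im (p$1)\<bar> \<le> \<rho> \<and>
      \<bar>Re (p$2)\<bar> \<le> \<rho> \<and> \<bar>Im (p$2)\<bar> \<le> \<rho> \<and> \<bar>Re (p$3)\<bar> \<le> \<rho>}"
  have "Re ((\<rho> *\<^sub>R q1)$1) = \<rho>" "Im ((\<rho> *\<^sub>R q1)$1) = \<rho>" "Re ((\<rho> *\<^sub>R q1)$2) = \<rho>"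
    "Im ((\<rho> *\<^sub>R q1)$2) = \<rho>" "Re ((\<rho> *\<^sub>R q1)$3) = \<rho>"
    by (simp_all add: q1_def)
  then have "continuous_on Y (hot c)"
    using hot_continuous_on_box[OF summable[rule_format, OF \<open>\<rho> *\<^sub>R q1 \<in> U\<close>]] \<rho>(1)
    by (simp add: Y_def)
  moreover have "ball 0 \<rho> \<subseteq> Y"
  proof
    fix p :: pt assume "p \<in> ball 0 \<rho>"
    then have "norm (p$i) < \<rho>" for i
      using Finite_Cartesian_Product.norm_nth_le[of p i] by (simp add: dist_norm)
    then have "\<bar>Re (p$i)\<bar> \<le> \<rho> \<and> \<bar>Im (p$i)\<bar> \<le> \<rho>" for i
      using abs_Re_le_cmod[of "p$i"] abs_Im_le_cmod[of "p$i"] by (smt (verit))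
    then show "p \<in> Y"
      unfolding Y_def by simp
  qed
  ultimately have "continuous_on (ball 0 \<rho>) (hot c)"
    by (rule continuous_on_subset)
  then show ?thesis
    using \<rho> by (simp add: continuous_on_eq_continuous_at)
qed

lemma hot_at_0:
  assumes "\<forall>\<alpha>. wdeg \<alpha> < 3 \<longrightarrow> c \<alpha> = 0"
  shows "hot c 0 = 0"
proof -
  have "c \<alpha> * monom5 \<alpha> 0 = 0" for \<alpha>
  proof (cases "wdeg \<alpha> < 3")
    case True
    with assms have "c \<alpha> = 0" by blast
    then show ?thesis by simp
  next
    case False
    then have "monom5 \<alpha> 0 = 0" by (cases \<alpha>) (auto simp: monom5_def wdeg_def)
    then show ?thesis by simp
  qed
  then show ?thesis unfolding hot_def by (rule infsum_0)
qed

definition graph_fun :: "(midx \<Rightarrow> real) \<Rightarrow> pt \<Rightarrow> real" where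
  "graph_fun c p = cmod (p$1)^2 + cmod (p$2)^2 + Re ((p$1)^2) + hot c p"

definition graph_point :: "(midx \<Rightarrow> real) \<Rightarrow> pt \<Rightarrow> pt" where
  "graph_point c p = p + (graph_fun c p - Im (p$3)) *\<^sub>R axis 3 \<i>"

definition model_on_graph :: "real \<Rightarrow> real \<Rightarrow> (midx \<Rightarrow> real) \<Rightarrow> pt \<Rightarrow> real" where
  "model_on_graph m1 m2 c p = model_fun m1 m2 (graph_point c p)"

lemma defn_fun_eq_graph_fun: "defn_fun c p = Im (p$3) - graph_fun c p"
  by (simp add: defn_fun_def graph_fun_def)

lemma graph_fun_vertical: "graph_fun c (p + t *\<^sub>R axis 3 \<i>) = graph_fun c p"
  by (simp add: graph_fun_def hot_def monom5_def)

lemma graph_point_nth [simp]: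
  "graph_point c p $ 1 = p$1" "graph_point c p $ 2 = p$2"
  "graph_point c p $ 3 = Complex (Re (p$3)) (graph_fun c p)"
  by (simp_all add: graph_point_def complex_eq_iff)

lemma defn_fun_graph_point: "defn_fun c (graph_point c p) = 0"
  using graph_fun_vertical[of c p] by (simp add: defn_fun_eq_graph_fun graph_point_def)

lemma graph_point_vertical: "graph_point c (p + t *\<^sub>R axis 3 \<i>) = graph_point c p"
  by (simp add: vec_eq_iff forall_3 graph_fun_vertical)

lemma graph_point_0: "graph_fun c 0 = 0 \<Longrightarrow> graph_point c 0 = 0"
  by (simp add: graph_point_def)

lemma model_fun_vertical_diff:
  assumes "q$1 = p$1" "q$2 = p$2" "Re (q$3) = Re (p$3)"
  shows "model_fun m1 m2 p - model_fun m1 m2 q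
    = (Im (p$3) - Im (q$3)) * model_factor m1 m2 p (Im (p$3) + Im (q$3))"
  using assms by (simp add: model_fun_def model_factor_def algebra_simps power2_eq_square field_simps)

lemma graph_fun_has_derivative:
  assumes "(defn_fun c has_derivative D) (at (graph_point c y))"
  shows "(graph_fun c has_derivative (\<lambda>e. Im (e$3) - D e)) (at y)"
proof (rule has_derivative_translation_invariant)
  show "graph_fun c (p + (graph_fun c y - Im (y$3)) *\<^sub>R axis 3 \<i>) = graph_fun c p" for p
    by (rule graph_fun_vertical)
  have "graph_fun c = (\<lambda>p. Im (p$3) - defn_fun c p)"
    by (simp add: fun_eq_iff defn_fun_eq_graph_fun)
  with assms show "(graph_fun c has_derivative (\<lambda>e. Im (e$3) - D e))
      (at (y + (graph_fun c y - Im (y$3)) *\<^sub>R axis 3 \<i>))"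
    by (auto simp: graph_point_def intro!: derivative_eq_intros)
qed

lemma model_on_graph_has_derivative:
  assumes "(defn_fun c has_derivative D) (at (graph_point c y))"
  shows "(model_on_graph m1 m2 c has_derivative
    (\<lambda>e. model_fun_deriv m1 m2 (graph_point c y) (e - D e *\<^sub>R axis 3 \<i>))) (at y)"
proof -
  have "(graph_point c has_derivative (\<lambda>e. e - D e *\<^sub>R axis 3 \<i>)) (at y)"
    unfolding graph_point_def[abs_def]
    by (rule derivative_eq_intros graph_fun_has_derivative[OF assms] refl | simp)+
  from has_derivative_compose[OF this model_fun_has_derivative] show ?thesis
    by (simp add: model_on_graph_def[abs_def] o_def)
qed

lemma model_on_graph_deriv_along_generators:
  assumes tangent: "\<And>A. A \<in> g_generators m1 m2 t \<Longrightarrow>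
      \<exists>D. (defn_fun c has_derivative D) (at (graph_point c y)) \<and> D (affine_vf A (graph_point c y)) = 0"
  shows "\<exists>DG. (model_on_graph m1 m2 c has_derivative DG) (at y) \<and> DG (axis 3 \<i>) = 0 \<and>
    (\<forall>A\<in>g_generators m1 m2 t. \<bar>DG (affine_vf A (graph_point c y))\<bar>
      \<le> (4*\<bar>m2\<bar> + 2*\<bar>m1*m2\<bar>) * \<bar>model_on_graph m1 m2 c y\<bar>)"
proof -
  define s where "s = graph_point c y"
  have E1: "E1 m1 m2 t \<in> g_generators m1 m2 t" by (simp add: g_generators_def)
  obtain D where D: "(defn_fun c has_derivative D) (at s)"
    using tangent[OF E1] by (auto simp: s_def)
  have D_tangent: "D (affine_vf A s) = 0" if "A \<in> g_generators m1 m2 t" for A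
    using tangent[OF that] has_derivative_unique[OF D] by (metis s_def)
  define DG where "DG e = model_fun_deriv m1 m2 s (e - D e *\<^sub>R axis 3 \<i>)" for e
  have DG: "(model_on_graph m1 m2 c has_derivative DG) (at y)"
    using model_on_graph_has_derivative[of c D y m1 m2] D by (simp add: DG_def[abs_def] s_def)
  moreover have "DG (axis 3 \<i>) = 0"
    using DG by (rule has_derivative_const_direction) (simp add: model_on_graph_def graph_point_vertical)
  moreover have "\<bar>DG (affine_vf A s)\<bar> \<le> (4*\<bar>m2\<bar> + 2*\<bar>m1*m2\<bar>) * \<bar>model_on_graph m1 m2 c y\<bar>"
    if A: "A \<in> g_generators m1 m2 t" for A
  proof -
    obtain k where k: "\<bar>k\<bar> \<le> 4*\<bar>m2\<bar> + 2*\<bar>m1*m2\<bar>"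
      and "model_fun_deriv m1 m2 s (affine_vf A s) = k * model_fun m1 m2 s"
      using model_fun_deriv_generators[OF A] by blast
    then have "DG (affine_vf A s) = k * model_on_graph m1 m2 c y"
      by (simp add: DG_def D_tangent[OF A] model_on_graph_def flip: s_def)
    then show ?thesis
      using k by (simp add: abs_mult mult_right_mono)
  qed
  ultimately show ?thesis
    unfolding s_def by blast
qed

lemma model_on_graph_deriv_bound:
  assumes tangent: "\<And>A. A \<in> g_generators m1 m2 t \<Longrightarrow>
      \<exists>D. (defn_fun c has_derivative D) (at (graph_point c y)) \<and> D (affine_vf A (graph_point c y)) = 0"
    and close: "\<And>A. A \<in> g_generators m1 m2 t \<Longrightarrow>
      norm (affine_vf A (graph_point c y) - affine_vf A 0) \<le> 1/12"
  shows "\<exists>DG. (model_on_graph m1 m2 c has_derivative DG) (at y) \<and>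
    (\<forall>e. \<bar>DG e\<bar> \<le> 12 * (4*\<bar>m2\<bar> + 2*\<bar>m1*m2\<bar>) * \<bar>model_on_graph m1 m2 c y\<bar> * norm e)"
proof -
  define a where "a = (4*\<bar>m2\<bar> + 2*\<bar>m1*m2\<bar>) * \<bar>model_on_graph m1 m2 c y\<bar>"
  obtain DG where DG: "(model_on_graph m1 m2 c has_derivative DG) (at y)"
    and vertical: "DG (axis 3 \<i>) = 0"
    and along: "\<And>A. A \<in> g_generators m1 m2 t \<Longrightarrow> \<bar>DG (affine_vf A (graph_point c y))\<bar> \<le> a"
    using model_on_graph_deriv_along_generators[OF tangent] unfolding a_def by blast
  have near: "\<exists>w. norm (w - affine_vf A 0) \<le> 1/12 \<and> \<bar>DG w\<bar> \<le> a" if "A \<in> g_generators m1 m2 t" for A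
    using close[OF that] along[OF that] by blast
  \<comment> \<open>the tolerance 1/12 of \<open>close\<close> is the 1/(4 CARD(3)) of \<open>onorm_le_of_near_axes\<close>\<close>
  have "onorm DG \<le> 4 * real CARD(3) * a"
  proof (rule onorm_le_of_near_axes)
    show "bounded_linear DG" using DG by (rule has_derivative_bounded_linear)
    fix i :: 3 and z :: complex assume z: "z \<in> {1, \<i>}"
    from z exhaust_3[of i] consider "i = 3" "z = \<i>" | "(i, z) \<in> {(1, 1), (1, \<i>), (2, 1), (2, \<i>), (3, 1)}"
      by auto
    then show "\<exists>w. norm (w - axis i z) \<le> 1 / (4 * real CARD(3)) \<and> \<bar>DG w\<bar> \<le> a"
    proof cases
      case 1
      then show ?thesis using vertical by (intro exI[of _ "axis 3 \<i>"]) (simp add: a_def)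
    next
      case 2
      then show ?thesis
        using near[of "E1 m1 m2 t"] near[of "E2 m1 m2 t"] near[of "E3 m1 m2 t"]
          near[of "E4 m1 m2 t"] near[of "E5 m1 m2 t"]
        by (auto simp: g_generators_def affine_vf_generators_at_0)
    qed
  qed
  then have onorm_DG: "onorm DG \<le> 12 * a" by simp
  have "\<bar>DG e\<bar> \<le> 12 * a * norm e" for e
    using onorm[OF has_derivative_bounded_linear[OF DG], of e]
      mult_right_mono[OF onorm_DG norm_ge_zero[of e]] by simp
  with DG show ?thesis unfolding a_def by (simp only: mult.assoc) blast
qed

lemma model_on_graph_eq_0:
  assumes tangent: "\<And>y A. norm y < \<delta> \<Longrightarrow> A \<in> g_generators m1 m2 t \<Longrightarrow>
      \<exists>D. (defn_fun c has_derivative D) (at (graph_point c y)) \<and> D (affine_vf A (graph_point c y)) = 0"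
    and close: "\<And>y A. norm y < \<delta> \<Longrightarrow> A \<in> g_generators m1 m2 t \<Longrightarrow>
      norm (affine_vf A (graph_point c y) - affine_vf A 0) \<le> 1/12"
    and "graph_fun c 0 = 0" and "norm q < \<delta>"
  shows "model_on_graph m1 m2 c q = 0"
proof -
  define K where "K = 12 * (4*\<bar>m2\<bar> + 2*\<bar>m1*m2\<bar>) * norm q"
  define \<phi> where "\<phi> \<tau> = model_on_graph m1 m2 c (\<tau> *\<^sub>R q)" for \<tau>
  have "\<exists>d. (\<phi> has_real_derivative d) (at \<tau>) \<and> \<bar>d\<bar> \<le> K * \<bar>\<phi> \<tau>\<bar>" if "\<tau> \<in> {0..1}" for \<tau>
  proof -
    have "\<tau> * norm q \<le> norm q"
      using that by (intro mult_left_le_one_le) auto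
    then have "norm (\<tau> *\<^sub>R q) < \<delta>"
      using that \<open>norm q < \<delta>\<close> by simp
    with model_on_graph_deriv_bound[OF tangent close] obtain DG
      where DG: "(model_on_graph m1 m2 c has_derivative DG) (at (\<tau> *\<^sub>R q))"
        and bound: "\<forall>e. \<bar>DG e\<bar> \<le> 12 * (4*\<bar>m2\<bar> + 2*\<bar>m1*m2\<bar>) * \<bar>\<phi> \<tau>\<bar> * norm e"
      unfolding \<phi>_def by blast
    have "((\<lambda>x::real. x *\<^sub>R q) has_derivative (\<lambda>h. h *\<^sub>R q)) (at \<tau>)"
      by (auto intro!: derivative_eq_intros)
    from has_derivative_compose[OF this DG]
    have "(\<phi> has_derivative (\<lambda>h. h * DG q)) (at \<tau>)"
      using linear_scale[OF bounded_linear.linear[OF has_derivative_bounded_linear[OF DG]]]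
      by (simp add: \<phi>_def[abs_def] o_def)
    then have "(\<phi> has_real_derivative DG q) (at \<tau>)"
      by (simp add: has_field_derivative_def mult_commute_abs)
    moreover have "\<bar>DG q\<bar> \<le> K * \<bar>\<phi> \<tau>\<bar>"
      using bound by (simp add: K_def mult_ac)
    ultimately show ?thesis by blast
  qed
  then obtain d where "\<forall>\<tau>\<in>{0..1}. (\<phi> has_real_derivative d \<tau>) (at \<tau>) \<and> \<bar>d \<tau>\<bar> \<le> K * \<bar>\<phi> \<tau>\<bar>"
    by metis
  moreover have "\<phi> 0 = 0"
    using assms(3) by (simp add: \<phi>_def model_on_graph_def graph_point_0 model_fun_def)
  ultimately have "\<phi> 1 = 0"
    by (intro Gronwall_zero[of \<phi> d K]) auto
  then show ?thesis by (simp add: \<phi>_def)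
qed

lemma isCont_affine_vf: "isCont (affine_vf A) p"
proof -
  have "linear (\<lambda>p. affine_vf A p - affine_vf A 0)"
    by (rule linearI; simp add: affine_vf_def vec_eq_iff forall_3 algebra_simps;
        simp add: scaleR_conv_of_real algebra_simps)
  then have "isCont (\<lambda>p. (affine_vf A p - affine_vf A 0) + affine_vf A 0) p"
    unfolding linear_conv_bounded_linear by (rule continuous_add[OF linear_continuous_at continuous_const])
  then show ?thesis by simp
qed

lemma eventually_affine_vf_close:
  assumes "finite As" "\<epsilon> > 0"
  shows "\<forall>\<^sub>F s in nhds 0. \<forall>A\<in>As. norm (affine_vf A s - affine_vf A 0) \<le> \<epsilon>"
proof (rule eventually_ball_finite[OF assms(1)], rule ballI)
  fix A
  have "(affine_vf A \<longlongrightarrow> affine_vf A 0) (nhds 0)"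
    using isCont_affine_vf[of 0 A] by (simp add: isCont_def tendsto_at_iff_tendsto_nhds)
  then have "\<forall>\<^sub>F s in nhds 0. dist (affine_vf A s) (affine_vf A 0) < \<epsilon>"
    using assms(2) by (rule tendstoD)
  then show "\<forall>\<^sub>F s in nhds 0. norm (affine_vf A s - affine_vf A 0) \<le> \<epsilon>"
    by (rule eventually_mono) (simp add: dist_norm)
qed

lemma graph_zero_set_eq_model_zero_set:
  assumes "\<And>p. p \<in> B \<Longrightarrow> model_on_graph m1 m2 c p = 0"
    and "\<And>p. p \<in> B \<Longrightarrow> model_factor m1 m2 p (Im (p$3) + graph_fun c p) > 0"
  shows "{p\<in>B. defn_fun c p = 0} = {p\<in>B. model_fun m1 m2 p = 0}"
proof -
  have "defn_fun c p = 0 \<longleftrightarrow> model_fun m1 m2 p = 0" if "p \<in> B" for p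
  proof -
    have "model_fun m1 m2 p = (Im (p$3) - graph_fun c p) * model_factor m1 m2 p (Im (p$3) + graph_fun c p)"
      using model_fun_vertical_diff[of "graph_point c p" p m1 m2] assms(1)[OF that]
      by (simp add: model_on_graph_def)
    then show ?thesis
      using assms(2)[OF that] by (simp add: defn_fun_eq_graph_fun)
  qed
  then show ?thesis by blast
qed

lemma graph_point_near_0:
  assumes U: "open U" "0 \<in> U" and H_cont: "isCont (graph_fun c) 0" and H0: "graph_fun c 0 = 0"
  obtains \<delta> where "\<delta> > 0" and "\<And>y. norm y < \<delta> \<Longrightarrow> y \<in> U \<and> graph_point c y \<in> U \<and>
      (\<forall>A\<in>g_generators m1 m2 t. norm (affine_vf A (graph_point c y) - affine_vf A 0) \<le> 1/12) \<and>
      model_factor m1 m2 y (Im (y$3) + graph_fun c y) > 0"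
proof -
  have coord_cont: "isCont (\<lambda>p::pt. Re (p$i)) 0" "isCont (\<lambda>p::pt. Im (p$i)) 0" for i
    by (intro linear_continuous_at bounded_linear_compose[OF bounded_linear_Re bounded_linear_vec_nth]
        bounded_linear_compose[OF bounded_linear_Im bounded_linear_vec_nth])+
  have "\<forall>\<^sub>F s in nhds 0. s \<in> U \<and> (\<forall>A\<in>g_generators m1 m2 t. norm (affine_vf A s - affine_vf A 0) \<le> 1/12)"
    using eventually_nhds_in_open[OF U]
    by (intro eventually_conj eventually_affine_vf_close) (auto simp: g_generators_def)
  moreover have "isCont (graph_point c) 0"
    unfolding graph_point_def[abs_def] using H_cont by (intro continuous_intros coord_cont)
  then have "filterlim (graph_point c) (nhds 0) (nhds 0)"
    using graph_point_0[OF H0] by (simp add: isCont_def tendsto_nhds_iff)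
  ultimately have "\<forall>\<^sub>F y in nhds 0. graph_point c y \<in> U \<and>
      (\<forall>A\<in>g_generators m1 m2 t. norm (affine_vf A (graph_point c y) - affine_vf A 0) \<le> 1/12)"
    by (rule eventually_compose_filterlim)
  moreover have "isCont (\<lambda>p. model_factor m1 m2 p (Im (p$3) + graph_fun c p)) 0"
    unfolding model_factor_def using H_cont by (intro continuous_intros coord_cont)
  then have "((\<lambda>p. model_factor m1 m2 p (Im (p$3) + graph_fun c p)) \<longlongrightarrow> 1) (nhds 0)"
    using H0 by (simp add: isCont_def tendsto_nhds_iff model_factor_def)
  then have "\<forall>\<^sub>F y in nhds 0. model_factor m1 m2 y (Im (y$3) + graph_fun c y) > 0"
    by (rule order_tendstoD) simp
  moreover have "\<forall>\<^sub>F y in nhds 0. y \<in> U"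
    by (rule eventually_nhds_in_open[OF U])
  ultimately have "\<forall>\<^sub>F y in nhds 0. y \<in> U \<and> graph_point c y \<in> U \<and>
      (\<forall>A\<in>g_generators m1 m2 t. norm (affine_vf A (graph_point c y) - affine_vf A 0) \<le> 1/12) \<and>
      model_factor m1 m2 y (Im (y$3) + graph_fun c y) > 0"
    by eventually_elim blast
  then show ?thesis
    using that unfolding eventually_nhds_metric by (auto simp: dist_norm)
qed

lemma integral_variety_locally_model:
  assumes "integral_variety (g_alg m1 m2 t) M"
  shows "\<exists>\<delta>>0. M \<inter> ball 0 \<delta> = {p. model_fun m1 m2 p = 0} \<inter> ball 0 \<delta>"
proof -
  obtain U c where U: "open U" "0 \<in> U" and c0: "\<forall>\<alpha>. wdeg \<alpha> < 3 \<longrightarrow> c \<alpha> = 0"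
    and summable: "\<forall>p\<in>U. (\<lambda>\<alpha>. c \<alpha> * monom5 \<alpha> p) summable_on UNIV"
    and M: "M = {p \<in> U. defn_fun c p = 0}"
    and tangent: "\<forall>A\<in>g_alg m1 m2 t. \<forall>p\<in>M.
      \<exists>D. (defn_fun c has_derivative D) (at p) \<and> D (affine_vf A p) = 0"
    using assms unfolding integral_variety_def by blast
  have H0: "graph_fun c 0 = 0" by (simp add: graph_fun_def hot_at_0[OF c0])
  have "isCont (graph_fun c) 0"
    unfolding graph_fun_def[abs_def] using isCont_hot[OF U summable] by (intro continuous_intros) auto
  then obtain \<delta> where "\<delta> > 0" and \<delta>: "\<And>y. norm y < \<delta> \<Longrightarrow> y \<in> U \<and> graph_point c y \<in> U \<and>
      (\<forall>A\<in>g_generators m1 m2 t. norm (affine_vf A (graph_point c y) - affine_vf A 0) \<le> 1/12) \<and>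
      model_factor m1 m2 y (Im (y$3) + graph_fun c y) > 0"
    using graph_point_near_0[OF U _ H0] by blast
  have "model_on_graph m1 m2 c y = 0" if "norm y < \<delta>" for y
  proof (rule model_on_graph_eq_0[OF _ _ H0 that])
    fix y :: pt and A assume y: "norm y < \<delta>" and A: "A \<in> g_generators m1 m2 t"
    then have "graph_point c y \<in> M"
      using \<delta>[OF y] defn_fun_graph_point by (simp add: M)
    then show "\<exists>D. (defn_fun c has_derivative D) (at (graph_point c y)) \<and>
        D (affine_vf A (graph_point c y)) = 0"
      using tangent A g_generators_subset_g_alg by blast
    show "norm (affine_vf A (graph_point c y) - affine_vf A 0) \<le> 1/12"
      using \<delta>[OF y] A by blast
  qed
  then have "{p \<in> ball 0 \<delta>. defn_fun c p = 0} = {p \<in> ball 0 \<delta>. model_fun m1 m2 p = 0}"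
    using \<delta> by (intro graph_zero_set_eq_model_zero_set) auto
  moreover have "M \<inter> ball 0 \<delta> = {p \<in> ball 0 \<delta>. defn_fun c p = 0}"
    using \<delta> by (auto simp: M)
  ultimately show ?thesis
    using \<open>\<delta> > 0\<close> by blast
qed

lemma affinely_equivalent_if_local_zero_set:
  fixes L Li :: "complex^3^3" and b :: pt
  assumes inv: "L ** Li = mat 1" "Li ** L = mat 1"
    and zero_set: "\<And>p. P p \<longleftrightarrow> L *v p + b \<in> S"
    and local: "M \<inter> V = {p. P p} \<inter> V" and "open V" "0 \<in> V"
  shows "affinely_equivalent M S"
proof -
  define W where "W = (\<lambda>y. Li *v (y - b)) -` V"
  have "continuous_on UNIV (\<lambda>y. Li *v y - Li *v b)"
    by (intro continuous_intros)
  then have "continuous_on UNIV (\<lambda>y. Li *v (y - b))"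
    by (simp add: matrix_vector_mult_diff_distrib)
  then have "open W"
    unfolding W_def using \<open>open V\<close> by (simp add: open_vimage)
  have left_inv: "Li *v (L *v p + b - b) = p" for p
    by (simp add: matrix_vector_mul_assoc inv)
  have right_inv: "L *v (Li *v (y - b)) + b = y" for y
    by (simp add: matrix_vector_mul_assoc inv)
  have "(\<lambda>p. L *v p + b) ` (M \<inter> V) = S \<inter> W"
  proof (intro equalityI subsetI)
    fix y assume "y \<in> (\<lambda>p. L *v p + b) ` (M \<inter> V)"
    then show "y \<in> S \<inter> W"
      using local zero_set left_inv by (auto simp: W_def)
  next
    fix y assume "y \<in> S \<inter> W"
    then have "Li *v (y - b) \<in> M \<inter> V"
      using local zero_set right_inv by (auto simp: W_def)
    then show "y \<in> (\<lambda>p. L *v p + b) ` (M \<inter> V)"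
      using right_inv by (metis image_eqI)
  qed
  moreover have "invertible L"
    unfolding invertible_def using inv by blast
  ultimately show ?thesis
    unfolding affinely_equivalent_def using \<open>open W\<close> \<open>open V\<close> \<open>0 \<in> V\<close> by blast
qed

definition to_model1 :: "real \<Rightarrow> complex^3^3" where
  "to_model1 m1 = vector [vector [1, 0, - \<i> * of_real (m1/2)], vector [0, 1, 0], vector [0, 0, 1]]"

definition to_model1_inv :: "real \<Rightarrow> complex^3^3" where
  "to_model1_inv m1 = vector [vector [1, 0, \<i> * of_real (m1/2)], vector [0, 1, 0], vector [0, 0, 1]]"

lemma to_model1_inverse:
  "to_model1 m1 ** to_model1_inv m1 = mat 1" "to_model1_inv m1 ** to_model1 m1 = mat 1"
  by (simp_all add: to_model1_def to_model1_inv_def matrix_matrix_mult_def mat_def vec_eq_iff forall_3 sum_3)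

lemma model_fun_eq_0_iff_model1:
  "m2 = 0 \<Longrightarrow> model_fun m1 m2 p = 0 \<longleftrightarrow> to_model1 m1 *v p + 0 \<in> model1"
  by (simp add: to_model1_def model_fun_def model_factor_def model1_def matrix_vector_mult_def sum_3
      cmod_power2[unfolded power2_eq_square] algebra_simps power2_eq_square)

definition to_model2 :: "real \<Rightarrow> real \<Rightarrow> complex^3^3" where
  "to_model2 m1 m2 = vector [vector [of_real (sqrt 2), 0, - \<i> * of_real (m1/sqrt 2)], vector [0, 1, 0],
      vector [of_real (sqrt 2), 0, of_real (m2/sqrt 2) - \<i> * of_real (m1/sqrt 2)]]"

definition to_model2_inv :: "real \<Rightarrow> real \<Rightarrow> complex^3^3" where
  "to_model2_inv m1 m2 = vector [vector [of_real (1/sqrt 2) - \<i> * of_real (m1/(sqrt 2*m2)), 0,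
      \<i> * of_real (m1/(sqrt 2*m2))], vector [0, 1, 0], vector [- of_real (sqrt 2/m2), 0, of_real (sqrt 2/m2)]]"

definition to_model2_shift :: "real \<Rightarrow> pt" where
  "to_model2_shift m2 = vector [\<i> * of_real (1/(sqrt 2*m2)), 0, \<i> * of_real (1/(sqrt 2*m2))]"

lemma to_model2_inverse:
  assumes "m2 \<noteq> 0"
  shows "to_model2 m1 m2 ** to_model2_inv m1 m2 = mat 1" "to_model2_inv m1 m2 ** to_model2 m1 m2 = mat 1"
  using assms by (simp_all add: to_model2_def to_model2_inv_def matrix_matrix_mult_def mat_def vec_eq_iff
      forall_3 sum_3 complex_eq_iff field_simps)

lemma model2_identity:
  fixes s x1 y1 x2 y2 u v m1 m2 :: real
  assumes "s * s = 2" and "m2 \<noteq> 0"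
  shows "(s*y1 + m2* v/s - m1 * u/s + 1/(s*m2))^2
      - ((s*x1 + m1* v/s)^2 + (s*y1 - m1 * u/s + 1/(s*m2))^2 + x2^2 + y2^2)
    = v * (1 - 2*m1*x1 + 2*m2*y1 - m1*m2*u + ((m2^2 - m1^2)/2) * v) - 2*x1^2 - x2^2 - y2^2"
proof -
  define a where "a = s/2"
  define \<mu> where "\<mu> = 1/m2"
  have s: "s = 2*a" and a: "2*a*a = 1" and \<mu>: "m2 * \<mu> = 1"
    using assms by (simp_all add: a_def \<mu>_def field_simps)
  have "s \<noteq> 0" using assms(1) by auto
  then have divisions: "1/(s*m2) = a*\<mu>" "z/s = z*a" "(m2^2 - m1^2)/2 = (m2^2 - m1^2)*(a*a)" for z
    using assms a by (simp_all add: a_def \<mu>_def field_simps)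
  show ?thesis
    unfolding divisions unfolding s using a \<mu> by algebra
qed

lemma model_fun_eq_0_iff_model2:
  assumes "m2 \<noteq> 0"
  shows "model_fun m1 m2 p = 0 \<longleftrightarrow> to_model2 m1 m2 *v p + to_model2_shift m2 \<in> model2"
proof -
  let ?q = "to_model2 m1 m2 *v p + to_model2_shift m2"
  have "Im (?q$3)^2 - (cmod (?q$1)^2 + cmod (?q$2)^2)
    = (sqrt 2*Im (p$1) + m2*Im (p$3)/sqrt 2 - m1*Re (p$3)/sqrt 2 + 1/(sqrt 2*m2))^2
      - ((sqrt 2*Re (p$1) + m1*Im (p$3)/sqrt 2)^2 + (sqrt 2*Im (p$1) - m1*Re (p$3)/sqrt 2 + 1/(sqrt 2*m2))^2
        + Re (p$2)^2 + Im (p$2)^2)"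
    by (simp add: to_model2_def to_model2_shift_def matrix_vector_mult_def sum_3 cmod_power2 algebra_simps)
  also have "\<dots> = model_fun m1 m2 p"
    unfolding model_fun_def model_factor_def by (rule model2_identity) (simp_all add: assms)
  finally show ?thesis
    unfolding model2_def by auto
qed

theorem theorem4p4:
  fixes m1 m2 t16 :: real and M :: "(complex^3) set"
  assumes "integral_variety (g_alg m1 m2 t16) M"
  shows "affinely_equivalent M model1 \<or> affinely_equivalent M model2"
proof -
  obtain \<delta> where "\<delta> > 0" and M: "M \<inter> ball 0 \<delta> = {p. model_fun m1 m2 p = 0} \<inter> ball 0 \<delta>"
    using integral_variety_locally_model[OF assms] by blast
  show ?thesis
  proof (cases "m2 = 0")
    case True
    have "affinely_equivalent M model1"
      by (rule affinely_equivalent_if_local_zero_set[OF to_model1_inverse model_fun_eq_0_iff_model1[OF True] M])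
        (simp_all add: \<open>\<delta> > 0\<close>)
    then show ?thesis ..
  next
    case False
    have "affinely_equivalent M model2"
      by (rule affinely_equivalent_if_local_zero_set[OF to_model2_inverse[OF False]
          model_fun_eq_0_iff_model2[OF False] M]) (simp_all add: \<open>\<delta> > 0\<close>)
    then show ?thesis ..
  qed
qed

end
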